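(* Let $\mathbb{I}=\{0,\dots,N-1\}$ with the linear adjacency ($i$ adjacent to $i+1$ for $0\le i\le N-2$), let $L$ be a finite totally ordered set and let $x:\mathbb{I}\to L$ be surjective. For $l\in L$, two connected components merge together at level $l$ in the sublevel set filtration (i.e. there exist two distinct connected components of $L_{<l}$ that are contained in the same connected component of $L_{<l}\cup L_l$) if and only if $l$ is the level of a local (flat) maximum $x[m],x[m+1],\dots,x[n]$ with $m\neq 0$ and $n\neq N-1$, i.e. there exist $1\le m\le n\le N-2$ with $x[m]=\dots=x[n]=l$, $x[m-1]<l$ and $x[n+1]<l$.
   Context: $L_l=\{i:x[i]=l\}$, $L_{<l}=\{i:x[i]<l\}$. A subset $S\subseteq\mathbb{I}$ is connected if it is nonempty and any two of its elements are joined by a chain of elements of $S$ with consecutive elements adjacent; connected components are maximal connected subsets. A local (flat) maximum at level $l$ is a maximal run of consecutive indices with value $l$ whose existing outer neighbours all have value strictly less than $l$. *)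

theory Defs
  imports Main
begin

definition adjacent :: "nat \<Rightarrow> nat \<Rightarrow> bool" where
  "adjacent i j \<longleftrightarrow> j = Suc i \<or> i = Suc j"

definition chain_in :: "nat set \<Rightarrow> nat list \<Rightarrow> bool" where
  "chain_in S ps \<longleftrightarrow> ps \<noteq> [] \<and> set ps \<subseteq> S \<and>
     (\<forall>k. Suc k < length ps \<longrightarrow> adjacent (ps ! k) (ps ! Suc k))"

definition idx_connected :: "nat set \<Rightarrow> bool" where
  "idx_connected S \<longleftrightarrow> S \<noteq> {} \<and>
     (\<forall>i\<in>S. \<forall>j\<in>S. \<exists>ps. chain_in S ps \<and> hd ps = i \<and> last ps = j)"

definition idx_component :: "nat set \<Rightarrow> nat set \<Rightarrow> bool" where
  "idx_component S C \<longleftrightarrow> C \<subseteq> S \<and> idx_connected C \<and>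
     (\<forall>D. C \<subseteq> D \<and> D \<subseteq> S \<and> idx_connected D \<longrightarrow> D = C)"

definition level_set :: "nat \<Rightarrow> (nat \<Rightarrow> 'l) \<Rightarrow> 'l \<Rightarrow> nat set" where
  "level_set N x l = {i. i < N \<and> x i = l}"

definition sublevel_set :: "nat \<Rightarrow> (nat \<Rightarrow> 'l::order) \<Rightarrow> 'l \<Rightarrow> nat set" where
  "sublevel_set N x l = {i. i < N \<and> x i < l}"

definition merge_at :: "nat \<Rightarrow> (nat \<Rightarrow> 'l::order) \<Rightarrow> 'l \<Rightarrow> bool" where
  "merge_at N x l \<longleftrightarrow> (\<exists>C1 C2 D. idx_component (sublevel_set N x l) C1 \<and>
      idx_component (sublevel_set N x l) C2 \<and> C1 \<noteq> C2 \<and>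
      idx_component (sublevel_set N x l \<union> level_set N x l) D \<and> C1 \<subseteq> D \<and> C2 \<subseteq> D)"

definition interior_flat_max :: "nat \<Rightarrow> (nat \<Rightarrow> 'l::order) \<Rightarrow> 'l \<Rightarrow> bool" where
  "interior_flat_max N x l \<longleftrightarrow> (\<exists>m n. 1 \<le> m \<and> m \<le> n \<and> n + 2 \<le> N \<and>
      (\<forall>k. m \<le> k \<and> k \<le> n \<longrightarrow> x k = l) \<and> x (m - 1) < l \<and> x (Suc n) < l)"

end

theory Submission
  imports Defs
begin

text \<open>
  A subset of the path graph on \<open>{0..<N}\<close> is connected iff it is a nonempty interval, so
  connected components are maximal intervals. If two distinct components of \<open>L\<^sub><\<^sub>l\<close>
  lie in one interval of \<open>L\<^sub><\<^sub>l \<union> L\<^sub>l\<close>, the stretch between them cannot lie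
  entirely in \<open>L\<^sub><\<^sub>l\<close>, so it contains a point of level \<open>l\<close>; the maximal run of
  level-\<open>l\<close> points around it is flanked by points of \<open>L\<^sub><\<^sub>l\<close> and is an interior
  flat maximum. Conversely, the two outer neighbours of an interior flat maximum lie in
  different components of \<open>L\<^sub><\<^sub>l\<close>, separated by the run, but in the same interval of
  \<open>L\<^sub><\<^sub>l \<union> L\<^sub>l\<close>.
\<close>

definition order_convex :: "nat set \<Rightarrow> bool" where
  "order_convex S \<longleftrightarrow> (\<forall>i\<in>S. \<forall>j\<in>S. {i..j} \<subseteq> S)"

lemma chain_in_Cons_Cons:
  "chain_in S (a # b # ps) \<longleftrightarrow> a \<in> S \<and> adjacent a b \<and> chain_in S (b # ps)"
  by (auto simp: chain_in_def All_less_Suc2)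

lemma chain_in_rev: "chain_in S (rev ps) \<longleftrightarrow> chain_in S ps"
proof -
  have "chain_in S (rev ps)" if chain: "chain_in S ps" for ps
  proof -
    from chain have adj: "\<And>k. Suc k < length ps \<Longrightarrow> adjacent (ps ! k) (ps ! Suc k)"
      unfolding chain_in_def by blast
    have "adjacent (rev ps ! k) (rev ps ! Suc k)" if "Suc k < length ps" for k
      using adj[of "length ps - Suc (Suc k)"] that by (auto simp: rev_nth adjacent_def Suc_diff_Suc)
    with chain show ?thesis by (simp add: chain_in_def)
  qed
  then show ?thesis by (metis rev_rev_ident)
qed

lemma chain_in_upt: "i \<le> j \<Longrightarrow> {i..j} \<subseteq> S \<Longrightarrow> chain_in S [i..<Suc j]"
  by (auto simp: chain_in_def adjacent_def simp del: upt_Suc)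

lemma chain_in_between:
  "chain_in S ps \<Longrightarrow> min (hd ps) (last ps) \<le> k \<Longrightarrow> k \<le> max (hd ps) (last ps) \<Longrightarrow> k \<in> S"
proof (induction ps rule: induct_list012)
  case (3 a b ps)
  then show ?case
    by (cases "k = a") (auto simp: chain_in_Cons_Cons adjacent_def)
qed (auto simp: chain_in_def)

lemma idx_connected_iff: "idx_connected S \<longleftrightarrow> S \<noteq> {} \<and> order_convex S"
proof
  assume conn: "idx_connected S"
  have "{i..j} \<subseteq> S" if ij: "i \<in> S" "j \<in> S" for i j
  proof -
    obtain ps where "chain_in S ps" "hd ps = i" "last ps = j"
      using conn ij unfolding idx_connected_def by blast
    then show ?thesis using chain_in_between[of S ps] by fastforce
  qed
  with conn show "S \<noteq> {} \<and> order_convex S"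
    by (simp add: idx_connected_def order_convex_def)
next
  assume S: "S \<noteq> {} \<and> order_convex S"
  have "\<exists>ps. chain_in S ps \<and> hd ps = i \<and> last ps = j" if "i \<in> S" "j \<in> S" "i \<le> j" for i j
    using that S chain_in_upt[of i j S] by (auto simp: order_convex_def hd_upt simp del: upt_Suc)
  then have "\<exists>ps. chain_in S ps \<and> hd ps = i \<and> last ps = j" if "i \<in> S" "j \<in> S" for i j
    using that by (metis chain_in_rev hd_rev last_rev nat_le_linear)
  with S show "idx_connected S" by (simp add: idx_connected_def)
qed

lemma idx_component_iff:
  "idx_component S C \<longleftrightarrow> C \<subseteq> S \<and> C \<noteq> {} \<and> order_convex C \<and>
     (\<forall>D. C \<subseteq> D \<and> D \<subseteq> S \<and> order_convex D \<longrightarrow> D = C)"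
  by (auto simp: idx_component_def idx_connected_iff)

lemma idx_componentD:
  assumes "idx_component S C"
  shows "C \<subseteq> S" "C \<noteq> {}" "order_convex C"
  using assms by (simp_all add: idx_component_iff)

lemma idx_component_maximal:
  "idx_component S C \<Longrightarrow> C \<subseteq> D \<Longrightarrow> D \<subseteq> S \<Longrightarrow> order_convex D \<Longrightarrow> D = C"
  by (simp add: idx_component_iff)

lemma order_convex_Un:
  assumes "order_convex C" "order_convex D" "p \<in> C" "p \<in> D"
  shows "order_convex (C \<union> D)"
  unfolding order_convex_def
proof (intro ballI subsetI)
  fix i j k assume ij: "i \<in> C \<union> D" "j \<in> C \<union> D" and k: "k \<in> {i..j}"
  have between: "k \<in> E" if "order_convex E" "a \<in> E" "b \<in> E" "a \<le> k" "k \<le> b" for E a b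
    using that unfolding order_convex_def by (meson atLeastAtMost_iff subsetD)
  show "k \<in> C \<union> D"
  proof (cases "k \<le> p")
    case True
    with ij(1) k between[OF assms(1) _ assms(3), of i] between[OF assms(2) _ assms(4), of i]
    show ?thesis by auto
  next
    case False
    with ij(2) k between[OF assms(1) assms(3), of j] between[OF assms(2) assms(4), of j]
    show ?thesis by auto
  qed
qed

lemma idx_component_containing:
  assumes "C0 \<subseteq> S" "C0 \<noteq> {}" "order_convex C0"
  shows "\<exists>C. idx_component S C \<and> C0 \<subseteq> C"
proof -
  obtain p where p: "p \<in> C0" using assms(2) by blast
  define C where "C = {k. {p..k} \<subseteq> S \<and> {k..p} \<subseteq> S}"
  have convex_sub: "{p..k} \<subseteq> S \<and> {k..p} \<subseteq> S"
    if "order_convex D" "D \<subseteq> S" "p \<in> D" "k \<in> D" for D k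
    using that unfolding order_convex_def by blast
  have "C0 \<subseteq> C"
    using convex_sub[OF assms(3,1) p] by (auto simp: C_def)
  moreover have "C \<subseteq> S"
    by (auto simp: C_def) (metis atLeastAtMost_iff nle_le subset_eq)
  moreover have "order_convex C"
    unfolding order_convex_def C_def
    by (auto intro: order_trans)
  moreover have "D \<subseteq> C" if "C \<subseteq> D" "D \<subseteq> S" "order_convex D" for D
  proof -
    have "p \<in> D" using p \<open>C0 \<subseteq> C\<close> \<open>C \<subseteq> D\<close> by blast
    then show ?thesis using convex_sub[OF that(3,2) \<open>p \<in> D\<close>] by (auto simp: C_def)
  qed
  ultimately have "idx_component S C"
    using assms(2) unfolding idx_component_iff by blast
  with \<open>C0 \<subseteq> C\<close> show ?thesis by blast
qed

lemma idx_component_subset_component: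
  assumes C: "idx_component A C" and "A \<subseteq> B" and D: "idx_component B D"
    and "p \<in> C" "p \<in> D"
  shows "C \<subseteq> D"
proof -
  have "order_convex (C \<union> D)"
    using idx_componentD(3)[OF C] idx_componentD(3)[OF D] \<open>p \<in> C\<close> \<open>p \<in> D\<close>
    by (rule order_convex_Un)
  moreover have "C \<union> D \<subseteq> B"
    using idx_componentD(1)[OF C] idx_componentD(1)[OF D] \<open>A \<subseteq> B\<close> by blast
  ultimately have "C \<union> D = D"
    using idx_component_maximal[OF D] by blast
  then show ?thesis by blast
qed

lemma idx_components_disjoint:
  assumes "idx_component S C1" "idx_component S C2" "C1 \<noteq> C2"
  shows "C1 \<inter> C2 = {}"
  using idx_component_subset_component[OF assms(1) order_refl assms(2)]
    idx_component_subset_component[OF assms(2) order_refl assms(1)] assms(3)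
  by blast

lemma interior_flat_max_iff:
  "interior_flat_max N x l \<longleftrightarrow>
     (\<exists>a b. Suc a < b \<and> b < N \<and> x a < l \<and> x b < l \<and> (\<forall>k. a < k \<and> k < b \<longrightarrow> x k = l))"
proof
  assume "interior_flat_max N x l"
  then obtain m n where "1 \<le> m" "m \<le> n" "n + 2 \<le> N" "\<forall>k. m \<le> k \<and> k \<le> n \<longrightarrow> x k = l"
    "x (m - 1) < l" "x (Suc n) < l"
    unfolding interior_flat_max_def by blast
  then show "\<exists>a b. Suc a < b \<and> b < N \<and> x a < l \<and> x b < l \<and> (\<forall>k. a < k \<and> k < b \<longrightarrow> x k = l)"
    by (intro exI[of _ "m - 1"] exI[of _ "Suc n"]) auto
next
  assume "\<exists>a b. Suc a < b \<and> b < N \<and> x a < l \<and> x b < l \<and> (\<forall>k. a < k \<and> k < b \<longrightarrow> x k = l)"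
  then obtain a b where "Suc a < b" "b < N" "x a < l" "x b < l" "\<forall>k. a < k \<and> k < b \<longrightarrow> x k = l"
    by blast
  then show "interior_flat_max N x l"
    unfolding interior_flat_max_def by (intro exI[of _ "Suc a"] exI[of _ "b - 1"]) auto
qed

lemma flat_run_around:
  fixes x :: "nat \<Rightarrow> 'l::linorder"
  assumes "i \<le> k0" "k0 \<le> j" "x i < l" "x j < l" "x k0 = l"
    and le: "\<forall>k. i \<le> k \<and> k \<le> j \<longrightarrow> x k \<le> l"
  shows "\<exists>a b. i \<le> a \<and> a < k0 \<and> k0 < b \<and> b \<le> j \<and> x a < l \<and> x b < l \<and>
           (\<forall>k. a < k \<and> k < b \<longrightarrow> x k = l)"
proof -
  define lower where "lower = {k. i \<le> k \<and> k < k0 \<and> x k < l}"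
  define upper where "upper = {k. k0 < k \<and> k \<le> j \<and> x k < l}"
  define a where "a = Max lower"
  define b where "b = Min upper"
  have "i < k0" "k0 < j"
    using assms(1-5) by (auto simp: order.order_iff_strict)
  then have "i \<in> lower" "j \<in> upper"
    using assms(3,4) by (simp_all add: lower_def upper_def)
  moreover have fin: "finite lower" "finite upper"
    by (auto simp: lower_def upper_def)
  ultimately have a: "a \<in> lower" and b: "b \<in> upper"
    unfolding a_def b_def by (blast intro: Max_in Min_in)+
  have "x k = l" if "a < k" "k < b" for k
  proof -
    have outside: "k \<notin> lower" "k \<notin> upper"
      using that fin unfolding a_def b_def by (meson Max_ge Min_le leD)+
    have "\<not> x k < l"
      using outside that a b \<open>x k0 = l\<close> unfolding lower_def upper_def
      by (cases k k0 rule: linorder_cases) auto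
    moreover have "x k \<le> l"
      using le that a b by (simp add: lower_def upper_def)
    ultimately show ?thesis by simp
  qed
  with a b show ?thesis
    unfolding lower_def upper_def by blast
qed

lemma interior_flat_max_if_joined:
  fixes x :: "nat \<Rightarrow> 'l::linorder"
  assumes C1: "idx_component (sublevel_set N x l) C1"
    and C2: "idx_component (sublevel_set N x l) C2" "C1 \<inter> C2 = {}"
    and D: "idx_component (sublevel_set N x l \<union> level_set N x l) D" "C1 \<subseteq> D" "C2 \<subseteq> D"
    and ij: "i \<in> C1" "j \<in> C2" "i < j"
  shows "interior_flat_max N x l"
proof -
  have "i \<in> sublevel_set N x l" "j \<in> sublevel_set N x l"
    using idx_componentD(1)[OF C1] idx_componentD(1)[OF C2(1)] ij by blast+
  then have ij_below: "x i < l" "x j < l" "j < N"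
    by (simp_all add: sublevel_set_def)
  have "{i..j} \<subseteq> D"
    using idx_componentD(3)[OF D(1)] D(2,3) ij unfolding order_convex_def by blast
  then have "{i..j} \<subseteq> sublevel_set N x l \<union> level_set N x l"
    using idx_componentD(1)[OF D(1)] by blast
  then have le: "\<forall>k. i \<le> k \<and> k \<le> j \<longrightarrow> x k \<le> l"
    by (auto simp: sublevel_set_def level_set_def)
  have "\<exists>k0. i \<le> k0 \<and> k0 \<le> j \<and> x k0 = l"
  proof (rule ccontr)
    assume no_level: "\<nexists>k0. i \<le> k0 \<and> k0 \<le> j \<and> x k0 = l"
    have "{i..j} \<subseteq> sublevel_set N x l"
    proof
      fix k assume "k \<in> {i..j}"
      with le no_level have "x k < l"
        by (auto simp: order.strict_iff_order)
      with \<open>k \<in> {i..j}\<close> ij_below(3) show "k \<in> sublevel_set N x l"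
        by (simp add: sublevel_set_def)
    qed
    moreover have "order_convex (C1 \<union> {i..j})"
      using idx_componentD(3)[OF C1] ij(1,3)
      by (intro order_convex_Un[of _ _ i]) (auto simp: order_convex_def)
    ultimately have "C1 \<union> {i..j} = C1"
      using idx_component_maximal[OF C1] idx_componentD(1)[OF C1] by blast
    then show False
      using ij C2(2) by auto
  qed
  then obtain k0 where "i \<le> k0" "k0 \<le> j" "x k0 = l" by blast
  from flat_run_around[OF this(1,2) ij_below(1,2) this(3) le] obtain a b where
    "a < k0" "k0 < b" "b \<le> j" "x a < l" "x b < l" "\<forall>k. a < k \<and> k < b \<longrightarrow> x k = l"
    by blast
  with ij_below(3) show ?thesis
    unfolding interior_flat_max_iff by (intro exI[of _ a] exI[of _ b]) auto
qed

lemma interior_flat_max_if_merge_at: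
  fixes x :: "nat \<Rightarrow> 'l::linorder"
  assumes "merge_at N x l"
  shows "interior_flat_max N x l"
proof -
  obtain C1 C2 D where C: "idx_component (sublevel_set N x l) C1"
      "idx_component (sublevel_set N x l) C2" "C1 \<noteq> C2"
    and D: "idx_component (sublevel_set N x l \<union> level_set N x l) D" "C1 \<subseteq> D" "C2 \<subseteq> D"
    using assms unfolding merge_at_def by blast
  have disj: "C1 \<inter> C2 = {}"
    using idx_components_disjoint[OF C] .
  obtain i j where "i \<in> C1" "j \<in> C2"
    using idx_componentD(2)[OF C(1)] idx_componentD(2)[OF C(2)] by blast
  with disj consider "i < j" | "j < i"
    by (metis disjoint_iff linorder_neqE_nat)
  then show ?thesis
  proof cases
    case 1
    with C D disj \<open>i \<in> C1\<close> \<open>j \<in> C2\<close> show ?thesis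
      by (intro interior_flat_max_if_joined[of N x l C1 C2 D i j]) auto
  next
    case 2
    with C D disj \<open>i \<in> C1\<close> \<open>j \<in> C2\<close> show ?thesis
      by (intro interior_flat_max_if_joined[of N x l C2 C1 D j i]) auto
  qed
qed

lemma merge_at_if_interior_flat_max:
  fixes x :: "nat \<Rightarrow> 'l::linorder"
  assumes "interior_flat_max N x l"
  shows "merge_at N x l"
proof -
  obtain a b where ab: "Suc a < b" "b < N" "x a < l" "x b < l"
    and run: "\<forall>k. a < k \<and> k < b \<longrightarrow> x k = l"
    using assms unfolding interior_flat_max_iff by blast
  let ?A = "sublevel_set N x l" and ?B = "sublevel_set N x l \<union> level_set N x l"
  have "a \<in> ?A" "b \<in> ?A"
    using ab by (auto simp: sublevel_set_def)
  then obtain C1 C2 where C1: "idx_component ?A C1" "a \<in> C1" and C2: "idx_component ?A C2" "b \<in> C2"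
    using idx_component_containing[of "{a}" ?A] idx_component_containing[of "{b}" ?A]
    by (auto simp: order_convex_def)
  have "{a..b} \<subseteq> ?B"
    using ab run by (fastforce simp: sublevel_set_def level_set_def order.order_iff_strict)
  then obtain D where D: "idx_component ?B D" "{a..b} \<subseteq> D"
    using idx_component_containing[of "{a..b}" ?B] ab by (auto simp: order_convex_def)
  have "a \<in> D" "b \<in> D"
    using D(2) ab(1) by auto
  then have "C1 \<subseteq> D" "C2 \<subseteq> D"
    using idx_component_subset_component[OF C1(1) Un_upper1 D(1) C1(2)]
      idx_component_subset_component[OF C2(1) Un_upper1 D(1) C2(2)] by blast+
  moreover have "C1 \<noteq> C2"
  proof
    assume "C1 = C2"
    with C1 C2 have "{a..b} \<subseteq> C1"
      using idx_componentD(3)[OF C1(1)] unfolding order_convex_def by blast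
    moreover have "Suc a \<in> {a..b}"
      using ab(1) by simp
    ultimately have "Suc a \<in> ?A"
      using idx_componentD(1)[OF C1(1)] by blast
    with run ab show False
      by (auto simp: sublevel_set_def)
  qed
  ultimately show ?thesis
    unfolding merge_at_def using C1(1) C2(1) D(1) by blast
qed

theorem mainTheorem5:
  fixes N :: nat and x :: "nat \<Rightarrow> 'l::{linorder,finite}" and l :: 'l
  assumes surj: "x ` {..<N} = UNIV"
  shows "merge_at N x l \<longleftrightarrow> interior_flat_max N x l"
  using interior_flat_max_if_merge_at merge_at_if_interior_flat_max
  by blast

end
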